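(* Let $n,k,d\in\mathbb{N}$ with $n\ge k\ge d$. Then every symmetric polynomial $f=\sum_{\ell=0}^d\alpha_\ell f_\ell$ on $\{-1,1\}^n$ (with $\alpha_0,\dots,\alpha_d\in\mathbb{R}$) satisfies $$\inf_{g\in \mathscr{P}_{>k}^n} \|f-g\|_1 \leq \sum_{\ell=0}^d |\alpha _\ell|\, | \tilde{c}(k,\ell)|.$$
   Context: For $\ell\ge1$, $f_\ell(x)=\sum_{S\subseteq\{1,\dots,n\},|S|=\ell}\prod_{i\in S}x_i$ is the $\ell$-th elementary symmetric multilinear polynomial on $\{-1,1\}^n$, and $f_0\equiv1$. Every $g:\{-1,1\}^n\to\mathbb{R}$ has a unique expansion $g=\sum_S\widehat g(S)w_S$ with $w_S(x)=\prod_{i\in S}x_i$, and $\mathscr{P}^n_{>k}=\{g:\ \widehat g(S)=0\text{ whenever }|S|\le k\}$. $\|\cdot\|_1$ is the $L_1$ norm with respect to the uniform probability measure on $\{-1,1\}^n$. Let $T_k(x)=\sum_{\ell=0}^k c(k,\ell)x^\ell$ be the $k$-th Chebyshev polynomial of the first kind, $T_k(\cos\theta)=\cos(k\theta)$ (with $c(k,\ell)=0$ for $\ell>k$). Define $\tilde c(k,\ell)=c(k,\ell)$ if $k-\ell$ is even and $\tilde c(k,\ell)=c(k-1,\ell)$ if $k-\ell$ is odd. *)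

theory Defs
  imports "HOL-Library.FuncSet" "HOL-Computational_Algebra.Polynomial"
begin

definition cube :: "nat \<Rightarrow> (nat \<Rightarrow> real) set" where
  "cube n = PiE {0..<n} (\<lambda>_. {-1, 1})"

definition walsh :: "nat set \<Rightarrow> (nat \<Rightarrow> real) \<Rightarrow> real" where
  "walsh S x = (\<Prod>i\<in>S. x i)"

definition esym :: "nat \<Rightarrow> nat \<Rightarrow> (nat \<Rightarrow> real) \<Rightarrow> real" where
  "esym n l x = (if l = 0 then 1 else (\<Sum>S\<in>{S. S \<subseteq> {0..<n} \<and> card S = l}. walsh S x))"

definition Pgt :: "nat \<Rightarrow> nat \<Rightarrow> ((nat \<Rightarrow> real) \<Rightarrow> real) set" where
  "Pgt n k = {g. \<exists>a :: nat set \<Rightarrow> real. \<forall>x\<in>cube n.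
      g x = (\<Sum>S\<in>{S. S \<subseteq> {0..<n} \<and> k < card S}. a S * walsh S x)}"

definition L1norm :: "nat \<Rightarrow> ((nat \<Rightarrow> real) \<Rightarrow> real) \<Rightarrow> real" where
  "L1norm n h = (\<Sum>x\<in>cube n. \<bar>h x\<bar>) / 2 ^ n"

fun cheb :: "nat \<Rightarrow> real poly" where
  "cheb 0 = 1"
| "cheb (Suc 0) = [:0, 1:]"
| "cheb (Suc (Suc m)) = [:0, 2:] * cheb (Suc m) - cheb m"

definition cheb_coeff :: "nat \<Rightarrow> nat \<Rightarrow> real" where
  "cheb_coeff k l = coeff (cheb k) l"

definition cheb_coeff_tilde :: "nat \<Rightarrow> nat \<Rightarrow> real" where
  "cheb_coeff_tilde k l = (if even (k - l) then cheb_coeff k l else cheb_coeff (k - 1) l)"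

end

theory Submission
  imports Defs
begin

text \<open>
  For \<open>|t| \<le> 1\<close> the Riesz product \<open>R\<^sub>t(x) = \<Prod>\<^sub>i (1 + t x\<^sub>i)\<close> is nonnegative with mean 1,
  so its L1-norm is 1, and its Walsh coefficient at \<open>S\<close> is \<open>t\<^bsup>|S|\<^esup>\<close>. Hence if a signed
  measure \<open>\<mu> = \<Sum>\<^sub>j w\<^sub>j \<delta>(t\<^sub>j)\<close> on \<open>[-1, 1]\<close> has moments \<open>\<integral> t\<^sup>r d\<mu> = [r = l]\<close> for all
  \<open>r \<le> k\<close>, then \<open>f\<^sub>l - \<integral> R\<^sub>t d\<mu>\<close> lies in \<open>P\<^sub>>\<^sub>k\<close>, while \<open>\<integral> R\<^sub>t d\<mu>\<close> has L1-norm at most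
  \<open>\<Sum>\<^sub>j |w\<^sub>j|\<close>.

  When \<open>k - l\<close> is even, such a \<open>\<mu>\<close> of total variation at most \<open>|c(k,l)|\<close> lives on the
  extremal points \<open>cos (j\<pi>/k)\<close> of \<open>T\<^sub>k\<close>: its weights are the \<open>l\<close>-th coefficients of the
  Lagrange basis, so its total variation is the \<open>l\<close>-th coefficient of a polynomial of degree
  \<open>k\<close> bounded by 1 at these points, which V. Markov's alternation argument bounds by
  \<open>|c(k,l)|\<close>. When \<open>k - l\<close> is odd, symmetrising the measure obtained for \<open>k - 1\<close> also
  kills the \<open>k\<close>-th moment.
\<close>

section \<open>Chebyshev polynomials and their extremal points\<close>

lemma poly_cheb_cos: "poly (cheb k) (cos x) = cos (real k * x)"
proof (induction k rule: cheb.induct)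
  case (3 m)
  have "cos (real (Suc (Suc m)) * x) = 2 * cos x * cos (real (Suc m) * x) - cos (real m * x)"
    using cos_add[of "real (Suc m) * x" x] cos_diff[of "real (Suc m) * x" x]
    by (simp add: algebra_simps)
  with 3 show ?case
    by simp
qed simp_all

lemma degree_cheb_le: "degree (cheb k) \<le> k"
proof (induction k rule: cheb.induct)
  case (3 m)
  have "degree ([:0, 2:] * cheb (Suc m)) \<le> Suc (Suc m)"
    using degree_mult_le[of "[:0, 2::real:]" "cheb (Suc m)"] "3.IH"(1) by simp
  with "3.IH"(2) show ?case
    by (simp add: degree_diff_le)
qed simp_all

definition cheb_node :: "nat \<Rightarrow> nat \<Rightarrow> real" where
  "cheb_node k j = cos (real j * pi / real k)"

lemma cheb_node_strict_antimono:
  assumes "i < j" "j \<le> k"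
  shows "cheb_node k j < cheb_node k i"
proof -
  have "real i * pi / real k < real j * pi / real k" "real j * pi / real k \<le> pi"
    using assms by (simp_all add: divide_strict_right_mono field_simps)
  then show ?thesis
    unfolding cheb_node_def by (intro cos_monotone_0_pi) auto
qed

lemma inj_on_cheb_node: "inj_on (cheb_node k) {..k}"
  by (intro inj_onI) (metis atMost_iff cheb_node_strict_antimono less_irrefl linorder_neqE_nat)

lemma cheb_node_reflect:
  assumes "0 < k" "j \<le> k"
  shows "cheb_node k (k - j) = - cheb_node k j"
proof -
  have "real (k - j) * pi / real k = pi - real j * pi / real k"
    using assms by (simp add: of_nat_diff field_simps)
  then show ?thesis
    unfolding cheb_node_def by simp
qed

lemma poly_cheb_cheb_node: "0 < k \<Longrightarrow> poly (cheb k) (cheb_node k j) = (-1) ^ j"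
  by (simp add: cheb_node_def poly_cheb_cos)

lemma abs_cheb_node_le: "\<bar>cheb_node k j\<bar> \<le> 1"
  by (simp add: cheb_node_def)

lemma cheb_node_nonneg:
  assumes "2 * j \<le> k"
  shows "0 \<le> cheb_node k j"
proof -
  have "real j * pi / real k \<le> pi / 2"
    using assms by (cases "k = 0") (simp_all add: field_simps)
  then show ?thesis
    unfolding cheb_node_def by (intro cos_ge_zero) (auto intro: order_trans[of _ 0])
qed

section \<open>Lagrange interpolation\<close>

definition lagrange_basis :: "('a \<Rightarrow> 'b::field) \<Rightarrow> 'a set \<Rightarrow> 'a \<Rightarrow> 'b poly" where
  "lagrange_basis t A j = smult (1 / (\<Prod>i\<in>A - {j}. t j - t i)) (\<Prod>i\<in>A - {j}. [:- t i, 1:])"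

definition lagrange_interp :: "('a \<Rightarrow> 'b::field) \<Rightarrow> 'a set \<Rightarrow> ('a \<Rightarrow> 'b) \<Rightarrow> 'b poly" where
  "lagrange_interp t A c = (\<Sum>j\<in>A. smult (c j) (lagrange_basis t A j))"

lemma poly_lagrange_basis:
  assumes "finite A" "inj_on t A" "i \<in> A" "j \<in> A"
  shows "poly (lagrange_basis t A j) (t i) = (if i = j then 1 else 0)"
proof -
  have "(\<Prod>m\<in>A - {j}. t j - t m) \<noteq> 0"
    using assms by (auto simp: inj_on_def)
  moreover have "(\<Prod>m\<in>A - {j}. t i - t m) = 0" if "i \<noteq> j"
    using assms that by (intro prod_zero) auto
  ultimately show ?thesis
    using assms by (auto simp: lagrange_basis_def poly_prod)
qed

lemma degree_lagrange_basis_less: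
  assumes "finite A" "j \<in> A"
  shows "degree (lagrange_basis t A j) < card A"
proof -
  have "degree (\<Prod>i\<in>A - {j}. [:- t i, 1:]) \<le> (\<Sum>i\<in>A - {j}. degree [:- t i, 1:])"
    using degree_prod_sum_le[of "A - {j}" "\<lambda>i. [:- t i, 1:]"] assms by (simp add: o_def)
  also have "\<dots> < card A"
    using assms card_gt_0_iff[of A] by (auto simp: card_Diff_singleton)
  finally show ?thesis
    by (simp add: lagrange_basis_def)
qed

lemma poly_lagrange_interp:
  assumes "finite A" "inj_on t A" "i \<in> A"
  shows "poly (lagrange_interp t A c) (t i) = c i"
  using assms by (simp add: lagrange_interp_def poly_sum poly_lagrange_basis if_distrib cong: if_cong)

lemma degree_lagrange_interp_less:
  assumes "finite A" "A \<noteq> {}"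
  shows "degree (lagrange_interp t A c) < card A"
  unfolding lagrange_interp_def
proof (rule degree_sum_less)
  show "0 < card A"
    using assms by (simp add: card_gt_0_iff)
  show "degree (smult (c j) (lagrange_basis t A j)) < card A" if "j \<in> A" for j
    using degree_lagrange_basis_less[OF assms(1) that] degree_smult_le le_less_trans by blast
qed

lemma lagrange_interp_unique:
  fixes p :: "'b::field poly"
  assumes "finite A" "inj_on t A" "degree p < card A"
  shows "lagrange_interp t A (\<lambda>j. poly p (t j)) = p"
proof (rule ccontr)
  define r where "r = lagrange_interp t A (\<lambda>j. poly p (t j)) - p"
  assume "lagrange_interp t A (\<lambda>j. poly p (t j)) \<noteq> p"
  then have "r \<noteq> 0"
    by (simp add: r_def)
  have "A \<noteq> {}"
    using assms by auto
  then have "degree r < card A"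
    unfolding r_def using assms(1,3) by (intro degree_diff_less degree_lagrange_interp_less)
  have "t ` A \<subseteq> {x. poly r x = 0}"
    using assms by (auto simp: r_def poly_lagrange_interp)
  then have "card (t ` A) \<le> card {x. poly r x = 0}"
    by (rule card_mono[OF poly_roots_finite[OF \<open>r \<noteq> 0\<close>]])
  also have "\<dots> \<le> degree r"
    by (rule card_poly_roots_bound[OF \<open>r \<noteq> 0\<close>])
  finally show False
    using \<open>degree r < card A\<close> card_image[OF assms(2)] by linarith
qed

section \<open>V. Markov's coefficient bound at the Chebyshev nodes\<close>

definition parity_part :: "nat \<Rightarrow> 'a::field_char_0 poly \<Rightarrow> 'a poly" where
  "parity_part k q = smult (1 / 2) (q + smult ((-1) ^ k) (pcompose q [:0, -1:]))"

lemma coeff_parity_part: "coeff (parity_part k q) i = (if even (k + i) then coeff q i else 0)"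
  by (cases "even (k + i)")
    (auto simp: parity_part_def coeff_pcompose_linear power_add[symmetric] minus_one_power_iff)

lemma poly_parity_part: "poly (parity_part k q) x = (poly q x + (-1) ^ k * poly q (- x)) / 2"
  by (simp add: parity_part_def poly_pcompose)

lemma poly_parity_part_minus: "poly (parity_part k q) (- x) = (-1) ^ k * poly (parity_part k q) x"
proof -
  have "(-1) ^ k * (-1) ^ k = (1::'a)"
    by (simp flip: power_mult_distrib)
  then show ?thesis
    by (simp add: poly_parity_part distrib_left mult.assoc[symmetric] add.commute)
qed

lemma degree_parity_part_le: "degree (parity_part k q) \<le> degree q"
  by (rule degree_le) (simp add: coeff_parity_part coeff_eq_0)

lemma coeff_mult_quadratic:
  fixes Q :: "'a::comm_ring_1 poly"
  shows "coeff (Q * [:- a, 0, 1:]) n = (if 2 \<le> n then coeff Q (n - 2) else 0) - a * coeff Q n"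
proof -
  have "Q * [:- a, 0, 1:] = smult (- a) Q + pCons 0 (pCons 0 Q)"
    by (simp add: mult_pCons_right smult_1_left)
  then show ?thesis
    by (cases n; cases "n - 1") (auto simp: coeff_pCons split: nat.split)
qed

lemma degree_prod_quadratics:
  fixes a :: "nat \<Rightarrow> 'a::idom"
  shows "degree (\<Prod>j<m. [:- a j, 0, 1:]) = 2 * m"
  by (subst degree_prod_eq_sum_degree) auto

lemma sign_coeff_prod_quadratics:
  fixes a :: "nat \<Rightarrow> real"
  assumes "\<forall>j<m. 0 < a j" "u \<le> m"
  shows "0 < (-1) ^ (m - u) * coeff (\<Prod>j<m. [:- a j, 0, 1:]) (2 * u)"
  using assms
proof (induction m arbitrary: u)
  case (Suc m)
  define Q where "Q = (\<Prod>j<m. [:- a j, 0, 1:])"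
  have IH: "0 < (-1) ^ (m - v) * coeff Q (2 * v)" if "v \<le> m" for v
    using Suc that by (simp add: Q_def)
  have "0 < a m"
    using Suc.prems by simp
  have coeff_Suc: "coeff (\<Prod>j<Suc m. [:- a j, 0, 1:]) (2 * u)
      = (if 1 \<le> u then coeff Q (2 * (u - 1)) else 0) - a m * coeff Q (2 * u)"
    by (cases u) (simp_all add: Q_def coeff_mult_quadratic)
  consider "u = 0" | "1 \<le> u" "u \<le> m" | "u = Suc m"
    using Suc.prems by linarith
  then show ?case
  proof cases
    case 1
    then have "(-1) ^ (Suc m - u) * coeff (\<Prod>j<Suc m. [:- a j, 0, 1:]) (2 * u)
        = a m * ((-1) ^ (m - 0) * coeff Q (2 * 0))"
      unfolding coeff_Suc by simp
    then show ?thesis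
      using IH[of 0] \<open>0 < a m\<close> by simp
  next
    case 2
    then have "(-1) ^ (Suc m - u) * coeff (\<Prod>j<Suc m. [:- a j, 0, 1:]) (2 * u)
        = (-1) ^ (m - (u - 1)) * coeff Q (2 * (u - 1)) + a m * ((-1) ^ (m - u) * coeff Q (2 * u))"
      unfolding coeff_Suc by (simp add: Suc_diff_le algebra_simps)
    moreover have "0 < (-1) ^ (m - (u - 1)) * coeff Q (2 * (u - 1))"
      using 2 by (intro IH) simp
    moreover have "0 < a m * ((-1) ^ (m - u) * coeff Q (2 * u))"
      using IH[of u] \<open>0 < a m\<close> 2 by simp
    ultimately show ?thesis
      by linarith
  next
    case 3
    have "coeff Q (2 * Suc m) = 0"
      by (simp add: Q_def degree_prod_quadratics coeff_eq_0)
    then show ?thesis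
      using IH[of m] 3 unfolding coeff_Suc by simp
  qed
qed simp

lemma prod_quadratics_dvd:
  fixes p :: "real poly" and y :: "nat \<Rightarrow> real"
  assumes "\<forall>j<m. 0 < y j" "inj_on y {..<m}" "\<forall>j<m. poly p (y j) = 0 \<and> poly p (- y j) = 0"
  shows "(\<Prod>j<m. [:- (y j)\<^sup>2, 0, 1:]) dvd p"
  using assms
proof (induction m)
  case (Suc m)
  define Q where "Q = (\<Prod>j<m. [:- (y j)\<^sup>2, 0, 1:])"
  have "Q dvd p"
    using Suc by (simp add: Q_def inj_on_def)
  then obtain h where h: "p = Q * h" ..
  have "0 < y m"
    using Suc.prems(1) by simp
  have "(y m)\<^sup>2 \<noteq> (y j)\<^sup>2" if "j < m" for j
  proof -
    have "y m \<noteq> y j"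
      using inj_on_contraD[OF Suc.prems(2), of m j] that by simp
    then show ?thesis
      using Suc.prems(1) that by (simp add: power2_eq_iff_nonneg less_imp_le)
  qed
  then have "poly Q x \<noteq> 0" if "x\<^sup>2 = (y m)\<^sup>2" for x
  proof -
    have "poly Q x = (\<Prod>j<m. x\<^sup>2 - (y j)\<^sup>2)"
      by (simp add: Q_def poly_prod power2_eq_square)
    then show ?thesis
      using \<open>\<And>j. j < m \<Longrightarrow> (y m)\<^sup>2 \<noteq> (y j)\<^sup>2\<close> that by simp
  qed
  then have "poly h (y m) = 0" "poly h (- y m) = 0"
    using Suc.prems(3) h by (auto simp: poly_mult)
  have "[:- y m, 1:] dvd h"
    using \<open>poly h (y m) = 0\<close> poly_eq_0_iff_dvd by blast
  then obtain h1 where h_eq1: "h = [:- y m, 1:] * h1" ..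
  have "poly h1 (- y m) = 0"
    using \<open>poly h (- y m) = 0\<close> \<open>0 < y m\<close> by (simp add: h_eq1 poly_mult)
  then have "[:- (- y m), 1:] dvd h1"
    using poly_eq_0_iff_dvd by blast
  then obtain h2 where h_eq2: "h1 = [:- (- y m), 1:] * h2" ..
  have "[:- y m, 1:] * [:- (- y m), 1:] = [:- (y m)\<^sup>2, 0, 1:]"
    by (simp add: power2_eq_square)
  then have "h = [:- (y m)\<^sup>2, 0, 1:] * h2"
    by (simp only: h_eq1 h_eq2 mult.assoc[symmetric])
  then have "p = Q * [:- (y m)\<^sup>2, 0, 1:] * h2"
    using h by (simp only: mult.assoc)
  then show ?case
    by (simp add: Q_def)
qed simp

lemma parity_poly_factorization:
  fixes p :: "real poly" and y :: "nat \<Rightarrow> real"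
  assumes "p \<noteq> 0" "degree p \<le> k" and parity: "\<And>x. poly p (- x) = (-1) ^ k * poly p x"
    and roots: "\<forall>j<k div 2. 0 < y j \<and> poly p (y j) = 0" and "inj_on y {..<k div 2}"
  obtains c where "c \<noteq> 0" "p = (\<Prod>j<k div 2. [:- (y j)\<^sup>2, 0, 1:]) * monom c (k mod 2)"
proof -
  define m where "m = k div 2"
  define e where "e = k mod 2"
  define Q where "Q = (\<Prod>j<m. [:- (y j)\<^sup>2, 0, 1:])"
  have "Q dvd p"
    unfolding Q_def m_def using roots \<open>inj_on y {..<k div 2}\<close> parity
    by (intro prod_quadratics_dvd) auto
  then obtain h where h: "p = Q * h" ..
  have "Q \<noteq> 0" "h \<noteq> 0"
    using \<open>p \<noteq> 0\<close> h by auto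
  then have "2 * m + degree h \<le> 2 * m + e"
    using \<open>degree p \<le> k\<close> h degree_mult_eq[of Q h]
    by (simp add: Q_def degree_prod_quadratics m_def e_def)
  then have "degree h \<le> e"
    by simp
  have coeff_h_0: "coeff h 0 = 0" if "e = 1"
  proof -
    have "odd k"
      using that by (simp add: e_def odd_iff_mod_2_eq_one)
    then have "poly p 0 = 0"
      using parity[of 0] by simp
    moreover have "poly Q 0 \<noteq> 0"
      using roots by (auto simp: Q_def poly_prod m_def)
    ultimately have "poly h 0 = 0"
      using h by (simp add: poly_mult)
    then show ?thesis
      by (simp add: poly_0_coeff_0)
  qed
  have "coeff h n = 0" if "n \<noteq> e" for n
  proof (cases "n < e")
    case True
    then have "e = 1" "n = 0"
      unfolding e_def by auto
    then show ?thesis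
      using coeff_h_0 by simp
  next
    case False
    then show ?thesis
      using \<open>degree h \<le> e\<close> that by (simp add: coeff_eq_0)
  qed
  then have h_monom: "h = monom (coeff h e) e"
    by (intro poly_eqI) (simp add: coeff_monom)
  then have "coeff h e \<noteq> 0"
    using \<open>h \<noteq> 0\<close> by (metis monom_eq_0)
  moreover have "p = Q * monom (coeff h e) e"
    using h h_monom by (metis (no_types))
  ultimately show ?thesis
    using that unfolding Q_def m_def e_def by blast
qed

lemma coeff_nonzero_if_parity_roots:
  fixes p :: "real poly" and y :: "nat \<Rightarrow> real"
  assumes "p \<noteq> 0" "degree p \<le> k" "\<And>x. poly p (- x) = (-1) ^ k * poly p x"
    and roots: "\<forall>j<k div 2. 0 < y j \<and> poly p (y j) = 0" and "inj_on y {..<k div 2}"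
    and "i \<le> k" "even (k + i)"
  shows "coeff p i \<noteq> 0"
proof -
  define Q where "Q = (\<Prod>j<k div 2. [:- (y j)\<^sup>2, 0, 1:])"
  obtain c where "c \<noteq> 0" and p: "p = Q * monom c (k mod 2)"
    using parity_poly_factorization[OF assms(1-5)] unfolding Q_def .
  define u where "u = i div 2"
  have i: "i = 2 * u + k mod 2"
    using \<open>even (k + i)\<close> unfolding u_def by presburger
  have "u \<le> k div 2"
    using \<open>i \<le> k\<close> unfolding u_def by (rule div_le_mono)
  then have "0 < (-1) ^ (k div 2 - u) * coeff Q (2 * u)"
    unfolding Q_def using roots by (intro sign_coeff_prod_quadratics) auto
  moreover have "coeff p i = c * coeff Q (2 * u)"
    by (simp add: p i mult.commute[of Q] coeff_monom_mult)
  ultimately show ?thesis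
    using \<open>c \<noteq> 0\<close> by auto
qed

lemma sign_change_if_alternating:
  fixes a b :: real
  assumes "0 < (-1) ^ Suc j * a" "0 < (-1) ^ j * b"
  shows "a * b < 0"
proof -
  have "(-1) ^ j * (-1) ^ j = (1::real)"
    by (simp flip: power_mult_distrib)
  moreover have "0 < ((-1) ^ Suc j * a) * ((-1) ^ j * b)"
    using assms by (rule mult_pos_pos)
  ultimately show ?thesis
    by (simp add: algebra_simps)
qed

lemma coeff_nonzero_if_alternating_at_cheb_nodes:
  fixes p :: "real poly"
  assumes "degree p \<le> k" and parity: "\<And>x. poly p (- x) = (-1) ^ k * poly p x"
    and alternating: "\<forall>j\<le>k. 0 < (-1) ^ j * poly p (cheb_node k j)"
    and "i \<le> k" "even (k + i)"
  shows "coeff p i \<noteq> 0"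
proof -
  have "p \<noteq> 0"
    using alternating by auto
  have "\<exists>y. cheb_node k (Suc j) < y \<and> y < cheb_node k j \<and> poly p y = 0" if "j < k" for j
  proof -
    have "poly p (cheb_node k (Suc j)) * poly p (cheb_node k j) < 0"
      using alternating that by (intro sign_change_if_alternating[of j]) (simp_all del: power_Suc)
    with cheb_node_strict_antimono[of j "Suc j" k] that show ?thesis
      using poly_IVT by fastforce
  qed
  then obtain y where y: "\<And>j. j < k \<Longrightarrow>
      cheb_node k (Suc j) < y j \<and> y j < cheb_node k j \<and> poly p (y j) = 0"
    by metis
  have "0 < y j" if "j < k div 2" for j
    using y[of j] cheb_node_nonneg[of "Suc j" k] that by fastforce
  moreover have "y j < y i" if "i < j" "j < k" for i j
  proof -
    have "cheb_node k j \<le> cheb_node k (Suc i)"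
      using cheb_node_strict_antimono[of "Suc i" j k] that by (cases "j = Suc i") auto
    then show ?thesis
      using y[of i] y[of j] that by fastforce
  qed
  then have "inj_on y {..<k div 2}"
    by (intro inj_onI) (metis lessThan_iff less_irrefl linorder_neqE_nat div_le_dividend
        order_less_le_trans)
  ultimately show ?thesis
    using coeff_nonzero_if_parity_roots[OF \<open>p \<noteq> 0\<close> \<open>degree p \<le> k\<close> parity _ _ \<open>i \<le> k\<close>
        \<open>even (k + i)\<close>] y by fastforce
qed

lemma minus_one_power_diff:
  assumes "j \<le> k"
  shows "(-1) ^ j * (-1) ^ k = ((-1) ^ (k - j) :: real)"
  using assms by (auto simp: minus_one_power_iff even_diff_nat)

lemma parity_part_alternating_at_cheb_nodes:
  fixes r :: "real poly"
  assumes "0 < k" and alternating: "\<forall>j\<le>k. 0 < (-1) ^ j * poly r (cheb_node k j)"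
  shows "\<forall>j\<le>k. 0 < (-1) ^ j * poly (parity_part k r) (cheb_node k j)"
proof (intro allI impI)
  fix j
  assume "j \<le> k"
  then have "(-1) ^ j * poly (parity_part k r) (cheb_node k j)
      = ((-1) ^ j * poly r (cheb_node k j) + (-1) ^ (k - j) * poly r (cheb_node k (k - j))) / 2"
    using cheb_node_reflect[OF \<open>0 < k\<close>] minus_one_power_diff
    by (simp add: poly_parity_part algebra_simps)
  then show "0 < (-1) ^ j * poly (parity_part k r) (cheb_node k j)"
    using alternating[rule_format, of j] alternating[rule_format, of "k - j"] \<open>j \<le> k\<close> by simp
qed

text \<open>
  If \<open>|coeff p l|\<close> were larger, then \<open>r = T\<^sub>k - c p\<close> with \<open>|c| < 1\<close> and \<open>coeff r l = 0\<close> would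
  alternate in sign at the \<open>k + 1\<close> nodes, and so would its part of parity \<open>k\<close>, whose
  coefficients of parity \<open>k\<close> therefore cannot vanish.
\<close>

lemma abs_coeff_le_abs_coeff_cheb:
  fixes p :: "real poly"
  assumes "0 < k" "l \<le> k" "even (k + l)" "degree p \<le> k"
    and bounded: "\<forall>j\<le>k. \<bar>poly p (cheb_node k j)\<bar> \<le> 1"
  shows "\<bar>coeff p l\<bar> \<le> \<bar>coeff (cheb k) l\<bar>"
proof (rule ccontr)
  assume "\<not> ?thesis"
  then have less: "\<bar>coeff (cheb k) l\<bar> < \<bar>coeff p l\<bar>"
    by simp
  define c where "c = coeff (cheb k) l / coeff p l"
  have "\<bar>c\<bar> < 1"
    using less by (simp add: c_def abs_divide)
  define r where "r = cheb k - smult c p"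
  have "coeff r l = 0"
    using less by (simp add: r_def c_def)
  have "degree r \<le> k"
    unfolding r_def using degree_cheb_le \<open>degree p \<le> k\<close>
    by (intro degree_diff_le) (auto intro: order_trans[OF degree_smult_le])
  have "0 < (-1) ^ j * poly r (cheb_node k j)" if "j \<le> k" for j
  proof -
    have "\<bar>c\<bar> * \<bar>poly p (cheb_node k j)\<bar> < 1"
      using bounded that \<open>\<bar>c\<bar> < 1\<close> by (meson abs_ge_zero le_less_trans mult_left_le)
    then have "\<bar>c * ((-1) ^ j * poly p (cheb_node k j))\<bar> < 1"
      by (simp add: abs_mult)
    moreover have "(-1) ^ j * poly r (cheb_node k j) = 1 - c * ((-1) ^ j * poly p (cheb_node k j))"
      using \<open>0 < k\<close> by (simp add: r_def poly_cheb_cheb_node algebra_simps flip: power_mult_distrib)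
    ultimately show ?thesis
      by linarith
  qed
  then have "\<forall>j\<le>k. 0 < (-1) ^ j * poly (parity_part k r) (cheb_node k j)"
    using \<open>0 < k\<close> by (intro parity_part_alternating_at_cheb_nodes) auto
  moreover have "degree (parity_part k r) \<le> k"
    using \<open>degree r \<le> k\<close> degree_parity_part_le[of k r] by simp
  ultimately have "coeff (parity_part k r) l \<noteq> 0"
    using coeff_nonzero_if_alternating_at_cheb_nodes poly_parity_part_minus assms(2,3) by blast
  then show False
    using \<open>coeff r l = 0\<close> \<open>even (k + l)\<close> by (simp add: coeff_parity_part)
qed

section \<open>Signed measures reproducing a coefficient\<close>

text \<open>
  The signed measure \<open>\<Sum>\<^sub>j\<^sub><\<^sub>N w\<^sub>j \<delta>(t\<^sub>j)\<close> on \<open>[-1, 1]\<close> integrates every polynomial of degree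
  at most \<open>k\<close> to its \<open>l\<close>-th coefficient.
\<close>

definition coeff_quadrature ::
  "nat \<Rightarrow> nat \<Rightarrow> nat \<Rightarrow> (nat \<Rightarrow> real) \<Rightarrow> (nat \<Rightarrow> real) \<Rightarrow> bool" where
  "coeff_quadrature k l N w t \<longleftrightarrow>
     (\<forall>j<N. \<bar>t j\<bar> \<le> 1) \<and> (\<forall>r\<le>k. (\<Sum>j<N. w j * t j ^ r) = (if r = l then 1 else 0))"

definition cheb_weight :: "nat \<Rightarrow> nat \<Rightarrow> nat \<Rightarrow> real" where
  "cheb_weight k l j = coeff (lagrange_basis (cheb_node k) {..k} j) l"

lemma coeff_quadrature_cheb_weight:
  "coeff_quadrature k l (Suc k) (cheb_weight k l) (cheb_node k)"
proof -
  have "(\<Sum>j<Suc k. cheb_weight k l j * cheb_node k j ^ r) = (if r = l then 1 else 0)"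
    if "r \<le> k" for r
  proof -
    have "lagrange_interp (cheb_node k) {..k} (\<lambda>j. poly (monom 1 r) (cheb_node k j)) = monom 1 r"
      using that by (intro lagrange_interp_unique inj_on_cheb_node) (simp_all add: degree_monom_eq)
    then have "coeff (lagrange_interp (cheb_node k) {..k} (\<lambda>j. cheb_node k j ^ r)) l
        = (if r = l then 1 else 0)"
      by (simp add: poly_monom coeff_monom)
    then show ?thesis
      by (simp add: lagrange_interp_def coeff_sum cheb_weight_def lessThan_Suc_atMost mult.commute)
  qed
  then show ?thesis
    by (simp add: coeff_quadrature_def abs_cheb_node_le)
qed

text \<open>The total variation is the \<open>l\<close>-th coefficient of the interpolant of the signs of the weights.\<close>

lemma sum_abs_cheb_weight_le:
  assumes "l \<le> k" "even (k + l)"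
  shows "(\<Sum>j<Suc k. \<bar>cheb_weight k l j\<bar>) \<le> \<bar>coeff (cheb k) l\<bar>"
proof (cases "k = 0")
  case True
  then show ?thesis
    using assms by (simp add: cheb_weight_def lagrange_basis_def)
next
  case False
  define p where "p = lagrange_interp (cheb_node k) {..k} (\<lambda>j. sgn (cheb_weight k l j))"
  have "degree p \<le> k"
    using degree_lagrange_interp_less[of "{..k}"] by (simp add: p_def less_Suc_eq_le)
  moreover have "\<forall>j\<le>k. \<bar>poly p (cheb_node k j)\<bar> \<le> 1"
    by (simp add: p_def poly_lagrange_interp inj_on_cheb_node abs_sgn_eq)
  ultimately have "\<bar>coeff p l\<bar> \<le> \<bar>coeff (cheb k) l\<bar>"
    using False assms by (intro abs_coeff_le_abs_coeff_cheb) auto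
  moreover have "coeff p l = (\<Sum>j<Suc k. \<bar>cheb_weight k l j\<bar>)"
    by (simp add: p_def lagrange_interp_def coeff_sum cheb_weight_def lessThan_Suc_atMost abs_sgn
        mult.commute)
  ultimately show ?thesis
    by simp
qed

lemma sum_lessThan_add_nat:
  fixes m n :: nat
  shows "(\<Sum>j<m + n. f j) = (\<Sum>j<m. f j) + (\<Sum>j<n. f (m + j))"
  by (induction n) (simp_all add: add.assoc)

text \<open>
  Averaging the measure with its reflection, the latter weighted by \<open>(-1)\<^sup>l\<close>, kills every
  moment whose parity differs from that of \<open>l\<close>, in particular the \<open>(k + 1)\<close>-st.
\<close>

lemma coeff_quadrature_symmetrize:
  assumes quadrature: "coeff_quadrature k l N w t" and "even (k + l)"
  obtains w' t' where "coeff_quadrature (Suc k) l (N + N) w' t'"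
    "(\<Sum>j<N + N. \<bar>w' j\<bar>) = (\<Sum>j<N. \<bar>w j\<bar>)"
proof
  define w' where "w' j = (if j < N then w j / 2 else (-1) ^ l * w (j - N) / 2)" for j
  define t' where "t' j = (if j < N then t j else - t (j - N))" for j
  have "(\<Sum>j<N + N. w' j * t' j ^ r) = (if r = l then 1 else 0)" if "r \<le> Suc k" for r
  proof -
    have "(\<Sum>j<N + N. w' j * t' j ^ r) = (\<Sum>j<N. w j * t j ^ r) * ((1 + (-1) ^ l * (-1) ^ r) / 2)"
      by (simp add: sum_lessThan_add_nat w'_def t'_def power_minus[of "t _" r] sum.distrib
          sum_divide_distrib sum_distrib_left algebra_simps)
    also have "\<dots> = (if r = l then 1 else 0)"
    proof (cases "r = Suc k")
      case True
      then have "odd (l + r)"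
        using \<open>even (k + l)\<close> by simp
      then show ?thesis
        using True \<open>even (k + l)\<close> by (auto simp: minus_one_power_iff)
    next
      case False
      then show ?thesis
        using quadrature that by (auto simp: coeff_quadrature_def minus_one_power_iff)
    qed
    finally show ?thesis .
  qed
  moreover have "\<forall>j<N + N. \<bar>t' j\<bar> \<le> 1"
    using quadrature by (auto simp: coeff_quadrature_def t'_def)
  ultimately show "coeff_quadrature (Suc k) l (N + N) w' t'"
    by (simp add: coeff_quadrature_def)
  show "(\<Sum>j<N + N. \<bar>w' j\<bar>) = (\<Sum>j<N. \<bar>w j\<bar>)"
    by (simp add: sum_lessThan_add_nat w'_def abs_mult flip: sum.distrib)
qed

lemma coeff_quadrature_cheb_coeff_tilde:
  assumes "l \<le> k"
  obtains N w t where "coeff_quadrature k l N w t" "(\<Sum>j<N. \<bar>w j\<bar>) \<le> \<bar>cheb_coeff_tilde k l\<bar>"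
proof (cases "even (k - l)")
  case True
  then have "(\<Sum>j<Suc k. \<bar>cheb_weight k l j\<bar>) \<le> \<bar>cheb_coeff_tilde k l\<bar>"
    using sum_abs_cheb_weight_le assms by (simp add: cheb_coeff_tilde_def cheb_coeff_def even_diff_nat)
  with coeff_quadrature_cheb_weight show ?thesis
    by (rule that)
next
  case False
  then have "l \<noteq> k"
    by auto
  then obtain k' where k: "k = Suc k'" and "l \<le> k'"
    using assms by (cases k) auto
  have "even (k' + l)"
    using False \<open>l \<le> k'\<close> by (simp add: k even_diff_nat)
  obtain w t where "coeff_quadrature k l (Suc k' + Suc k') w t"
    and "(\<Sum>j<Suc k' + Suc k'. \<bar>w j\<bar>) = (\<Sum>j<Suc k'. \<bar>cheb_weight k' l j\<bar>)"
    using coeff_quadrature_symmetrize[OF coeff_quadrature_cheb_weight \<open>even (k' + l)\<close>]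
    unfolding k .
  moreover have "(\<Sum>j<Suc k'. \<bar>cheb_weight k' l j\<bar>) \<le> \<bar>cheb_coeff_tilde k l\<bar>"
    using sum_abs_cheb_weight_le[OF \<open>l \<le> k'\<close> \<open>even (k' + l)\<close>] False
    by (simp add: k cheb_coeff_tilde_def cheb_coeff_def)
  ultimately show ?thesis
    using that by simp
qed

section \<open>Walsh expansions and Riesz products on the cube\<close>

definition riesz_average ::
  "nat \<Rightarrow> nat \<Rightarrow> (nat \<Rightarrow> real) \<Rightarrow> (nat \<Rightarrow> real) \<Rightarrow> (nat \<Rightarrow> real) \<Rightarrow> real" where
  "riesz_average n N w t x = (\<Sum>j<N. w j * (\<Prod>i\<in>{0..<n}. 1 + t j * x i))"

lemma prod_one_plus_eq_sum_walsh:
  "(\<Prod>i\<in>{0..<n}. 1 + t * x i) = (\<Sum>S\<in>Pow {0..<n}. t ^ card S * walsh S x)"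
proof -
  have "(\<Prod>i\<in>{0..<n}. t * x i + 1) = (\<Sum>S\<in>Pow {0..<n}. (\<Prod>i\<in>S. t * x i) * (\<Prod>i\<in>{0..<n} - S. 1))"
    by (rule prod_add) simp
  then show ?thesis
    by (simp add: walsh_def prod.distrib add.commute)
qed

lemma esym_eq_sum_walsh:
  "esym n l x = (\<Sum>S\<in>Pow {0..<n}. (if card S = l then 1 else 0) * walsh S x)"
proof -
  have "(\<Sum>S\<in>Pow {0..<n}. (if card S = l then 1 else 0) * walsh S x)
      = (\<Sum>S\<in>Pow {0..<n}. if card S = l then walsh S x else 0)"
    by (intro sum.cong) auto
  also have "\<dots> = (\<Sum>S\<in>{S \<in> Pow {0..<n}. card S = l}. walsh S x)"
    by (rule sum.inter_filter[symmetric]) simp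
  also have "\<dots> = esym n l x"
  proof (cases "l = 0")
    case True
    then have "{S \<in> Pow {0..<n}. card S = l} = {{}}"
      by (auto dest: finite_subset[OF _ finite_atLeastLessThan])
    with True show ?thesis
      by (simp add: esym_def walsh_def)
  next
    case False
    then show ?thesis
      by (simp add: esym_def Pow_def conj_commute)
  qed
  finally show ?thesis ..
qed

lemma L1norm_nonneg: "0 \<le> L1norm n h"
  by (simp add: L1norm_def sum_nonneg)

lemma L1norm_riesz_product:
  assumes "\<bar>t\<bar> \<le> 1"
  shows "L1norm n (\<lambda>x. \<Prod>i\<in>{0..<n}. 1 + t * x i) = 1"
proof -
  have "(\<Sum>x\<in>cube n. \<Prod>i\<in>{0..<n}. 1 + t * x i) = (\<Prod>i\<in>{0..<n}. \<Sum>v\<in>{-1, 1::real}. 1 + t * v)"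
    unfolding cube_def by (rule prod_sum_PiE[symmetric]) auto
  also have "\<dots> = 2 ^ n"
    by simp
  finally have "(\<Sum>x\<in>cube n. \<Prod>i\<in>{0..<n}. 1 + t * x i) = 2 ^ n" .
  moreover have "\<bar>\<Prod>i\<in>{0..<n}. 1 + t * x i\<bar> = (\<Prod>i\<in>{0..<n}. 1 + t * x i)" if "x \<in> cube n" for x
  proof -
    have "0 \<le> 1 + t * x i" if "i \<in> {0..<n}" for i
    proof -
      have "x i \<in> {-1, 1}"
        using \<open>x \<in> cube n\<close> that by (auto simp: cube_def)
      then show ?thesis
        using assms by auto
    qed
    then show ?thesis
      by (intro abs_of_nonneg prod_nonneg) auto
  qed
  ultimately show ?thesis
    by (simp add: L1norm_def)
qed

lemma L1norm_sum_le:
  "L1norm n (\<lambda>x. \<Sum>l\<in>A. c l * h l x) \<le> (\<Sum>l\<in>A. \<bar>c l\<bar> * L1norm n (h l))"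
proof -
  have "(\<Sum>x\<in>cube n. \<bar>\<Sum>l\<in>A. c l * h l x\<bar>) \<le> (\<Sum>x\<in>cube n. \<Sum>l\<in>A. \<bar>c l\<bar> * \<bar>h l x\<bar>)"
    by (intro sum_mono order_trans[OF sum_abs]) (simp add: abs_mult)
  also have "\<dots> = (\<Sum>l\<in>A. \<bar>c l\<bar> * (\<Sum>x\<in>cube n. \<bar>h l x\<bar>))"
    by (simp add: sum_distrib_left sum.swap[of _ "cube n"])
  finally have "L1norm n (\<lambda>x. \<Sum>l\<in>A. c l * h l x)
      \<le> (\<Sum>l\<in>A. \<bar>c l\<bar> * (\<Sum>x\<in>cube n. \<bar>h l x\<bar>)) / 2 ^ n"
    unfolding L1norm_def by (rule divide_right_mono) simp
  also have "\<dots> = (\<Sum>l\<in>A. \<bar>c l\<bar> * L1norm n (h l))"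
    unfolding L1norm_def by (simp only: sum_divide_distrib[of _ A] times_divide_eq_right)
  finally show ?thesis .
qed

lemma L1norm_riesz_average_le:
  assumes "\<forall>j<N. \<bar>t j\<bar> \<le> 1"
  shows "L1norm n (riesz_average n N w t) \<le> (\<Sum>j<N. \<bar>w j\<bar>)"
proof -
  have "L1norm n (riesz_average n N w t)
      \<le> (\<Sum>j<N. \<bar>w j\<bar> * L1norm n (\<lambda>x. \<Prod>i\<in>{0..<n}. 1 + t j * x i))"
    unfolding riesz_average_def by (rule L1norm_sum_le)
  also have "\<dots> = (\<Sum>j<N. \<bar>w j\<bar>)"
    using assms by (simp add: L1norm_riesz_product)
  finally show ?thesis .
qed

lemma sum_walsh_in_Pgt:
  assumes "\<And>S. S \<subseteq> {0..<n} \<Longrightarrow> card S \<le> k \<Longrightarrow> b S = 0"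
  shows "(\<lambda>x. \<Sum>S\<in>Pow {0..<n}. b S * walsh S x) \<in> Pgt n k"
  unfolding Pgt_def
proof (intro CollectI exI ballI)
  fix x :: "nat \<Rightarrow> real"
  show "(\<Sum>S\<in>Pow {0..<n}. b S * walsh S x) = (\<Sum>S\<in>{S. S \<subseteq> {0..<n} \<and> k < card S}. b S * walsh S x)"
    using assms by (intro sum.mono_neutral_right) (auto simp: not_less)
qed

lemma Pgt_sum:
  assumes "\<And>l. l \<in> A \<Longrightarrow> g l \<in> Pgt n k"
  shows "(\<lambda>x. \<Sum>l\<in>A. c l * g l x) \<in> Pgt n k"
proof -
  have "\<forall>l\<in>A. \<exists>a. \<forall>x\<in>cube n.
      g l x = (\<Sum>S\<in>{S. S \<subseteq> {0..<n} \<and> k < card S}. a S * walsh S x)"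
    using assms by (simp add: Pgt_def)
  then obtain a where a: "\<forall>l\<in>A. \<forall>x\<in>cube n.
      g l x = (\<Sum>S\<in>{S. S \<subseteq> {0..<n} \<and> k < card S}. a l S * walsh S x)"
    by (rule bchoice[THEN exE])
  show ?thesis
    unfolding Pgt_def
  proof (intro CollectI exI ballI)
    fix x
    assume "x \<in> cube n"
    then have "(\<Sum>l\<in>A. c l * g l x)
        = (\<Sum>l\<in>A. \<Sum>S\<in>{S. S \<subseteq> {0..<n} \<and> k < card S}. c l * a l S * walsh S x)"
      using a by (simp add: sum_distrib_left mult.assoc)
    then show "(\<Sum>l\<in>A. c l * g l x)
        = (\<Sum>S\<in>{S. S \<subseteq> {0..<n} \<and> k < card S}. (\<Sum>l\<in>A. c l * a l S) * walsh S x)"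
      by (simp add: sum_distrib_right sum.swap[of _ A])
  qed
qed

lemma esym_minus_riesz_average_in_Pgt:
  assumes "coeff_quadrature k l N w t"
  shows "(\<lambda>x. esym n l x - riesz_average n N w t x) \<in> Pgt n k"
proof -
  define b where "b S = (if card S = l then 1 else 0) - (\<Sum>j<N. w j * t j ^ card S)" for S :: "nat set"
  have "esym n l x - riesz_average n N w t x = (\<Sum>S\<in>Pow {0..<n}. b S * walsh S x)" for x
    by (simp add: b_def riesz_average_def esym_eq_sum_walsh prod_one_plus_eq_sum_walsh
        left_diff_distrib sum_subtractf sum_distrib_left sum_distrib_right mult.assoc
        sum.swap[of _ "Pow _"])
  moreover have "b S = 0" if "card S \<le> k" for S
    using assms that by (simp add: b_def coeff_quadrature_def)
  ultimately show ?thesis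
    using sum_walsh_in_Pgt[of n k b] by simp
qed

theorem theorem1p4:
  fixes n k d :: nat and \<alpha> :: "nat \<Rightarrow> real"
  assumes "d \<le> k" and "k \<le> n"
  shows "(INF g\<in>Pgt n k. L1norm n (\<lambda>x. (\<Sum>l\<le>d. \<alpha> l * esym n l x) - g x))
           \<le> (\<Sum>l\<le>d. \<bar>\<alpha> l\<bar> * \<bar>cheb_coeff_tilde k l\<bar>)"
proof -
  have "\<forall>l. \<exists>N w t. l \<le> k \<longrightarrow>
      coeff_quadrature k l N w t \<and> (\<Sum>j<N. \<bar>w j\<bar>) \<le> \<bar>cheb_coeff_tilde k l\<bar>"
    using coeff_quadrature_cheb_coeff_tilde by blast
  then obtain N W T where quadrature: "\<And>l. l \<le> k \<Longrightarrow> coeff_quadrature k l (N l) (W l) (T l)"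
    and total_variation: "\<And>l. l \<le> k \<Longrightarrow> (\<Sum>j<N l. \<bar>W l j\<bar>) \<le> \<bar>cheb_coeff_tilde k l\<bar>"
    by metis
  define R where "R l = riesz_average n (N l) (W l) (T l)" for l
  define g where "g x = (\<Sum>l\<le>d. \<alpha> l * (esym n l x - R l x))" for x
  have "g \<in> Pgt n k"
    unfolding g_def R_def using quadrature \<open>d \<le> k\<close>
    by (intro Pgt_sum esym_minus_riesz_average_in_Pgt) auto
  then have "(INF g\<in>Pgt n k. L1norm n (\<lambda>x. (\<Sum>l\<le>d. \<alpha> l * esym n l x) - g x))
      \<le> L1norm n (\<lambda>x. (\<Sum>l\<le>d. \<alpha> l * esym n l x) - g x)"
    by (intro cINF_lower bdd_belowI[of _ 0]) (auto simp: L1norm_nonneg)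
  also have "\<dots> = L1norm n (\<lambda>x. \<Sum>l\<le>d. \<alpha> l * R l x)"
    by (simp add: g_def right_diff_distrib sum_subtractf)
  also have "\<dots> \<le> (\<Sum>l\<le>d. \<bar>\<alpha> l\<bar> * L1norm n (R l))"
    by (rule L1norm_sum_le)
  also have "\<dots> \<le> (\<Sum>l\<le>d. \<bar>\<alpha> l\<bar> * \<bar>cheb_coeff_tilde k l\<bar>)"
    unfolding R_def using quadrature total_variation \<open>d \<le> k\<close>
    by (intro sum_mono mult_left_mono order_trans[OF L1norm_riesz_average_le])
      (auto simp: coeff_quadrature_def)
  finally show ?thesis .
qed

end
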